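(* Let $\xi$ and $\eta_j$ be even unimodal probability densities on $\mathbb R$, $n>0$, $\nu_j>0$, and for $i=0,1$ let $I_{ij}(d)=\int_{-\infty}^\infty x^i\sqrt n\,\eta_j(\sqrt n(x-d))\,\nu_j\xi(\nu_jx)\,dx$. If $|I_{1j}(d)|<\infty$ for all $j$ and $d$, then $|I_{1j}(d)/I_{0j}(d)|\le|d|$ for all $j$ and all real $d$.
   Context: A density is unimodal (and even) here if it is symmetric about $0$ and nonincreasing on $[0,\infty)$. *)

theory Defs
  imports "HOL-Analysis.Analysis"
begin

definition prob_density :: "(real \<Rightarrow> real) \<Rightarrow> bool" where
  "prob_density f \<longleftrightarrow> f \<in> borel_measurable lborel \<and> (\<forall>x. 0 \<le> f x)
     \<and> integrable lborel f \<and> integral\<^sup>L lborel f = 1"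

definition even_unimodal :: "(real \<Rightarrow> real) \<Rightarrow> bool" where
  "even_unimodal f \<longleftrightarrow> (\<forall>x. f (- x) = f x) \<and> (\<forall>x y. 0 \<le> x \<longrightarrow> x \<le> y \<longrightarrow> f y \<le> f x)"

definition Iintegrand :: "nat \<Rightarrow> real \<Rightarrow> (real \<Rightarrow> real) \<Rightarrow> (real \<Rightarrow> real) \<Rightarrow> real \<Rightarrow> real \<Rightarrow> real \<Rightarrow> real" where
  "Iintegrand i n \<xi> \<eta> \<nu> d x = x ^ i * sqrt n * \<eta> (sqrt n * (x - d)) * \<nu> * \<xi> (\<nu> * x)"

definition Iint :: "nat \<Rightarrow> real \<Rightarrow> (real \<Rightarrow> real) \<Rightarrow> (real \<Rightarrow> real) \<Rightarrow> real \<Rightarrow> real \<Rightarrow> real" where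
  "Iint i n \<xi> \<eta> \<nu> d = (\<integral>x. Iintegrand i n \<xi> \<eta> \<nu> d x \<partial>lborel)"

end

theory Submission
  imports Defs
begin

text \<open>Write the integrand as f(x) = g(x - d) h(x) with g and h even unimodal. Pairing x with -x,
  the first moment symmetrises to x h(x) (g(x - d) - g(x + d)), which has the sign of d because
  |x - d| \<le> |x + d| iff d x \<ge> 0. Pairing x with 2d - x, the same argument applied to h shows that
  (x - d) f(x) symmetrises to something of the sign of -d. So the mean of f lies between 0 and d.\<close>

lemma even_unimodal_abs_antimono:
  assumes "even_unimodal g" "\<bar>a\<bar> \<le> \<bar>b\<bar>"
  shows "g b \<le> g a"
proof -
  have "g x = g \<bar>x\<bar>" for x
    using assms(1) unfolding even_unimodal_def by (metis abs_of_nonneg abs_of_nonpos linorder_le_cases)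
  moreover have "g \<bar>b\<bar> \<le> g \<bar>a\<bar>"
    using assms unfolding even_unimodal_def by simp
  ultimately show ?thesis by metis
qed

lemma even_unimodal_le_zero: "even_unimodal g \<Longrightarrow> g x \<le> g 0"
  using even_unimodal_abs_antimono[of g 0 x] by simp

lemma even_unimodal_minus: "even_unimodal g \<Longrightarrow> g (- x) = g x"
  unfolding even_unimodal_def by blast

lemma even_unimodal_scaled:
  assumes "even_unimodal g" "0 \<le> c"
  shows "even_unimodal (\<lambda>x. c * g (k * x))"
  unfolding even_unimodal_def
proof (intro conjI allI impI)
  show "c * g (k * - x) = c * g (k * x)" for x
    using assms(1) unfolding even_unimodal_def by (metis mult_minus_right)
  show "c * g (k * y) \<le> c * g (k * x)" if "0 \<le> x" "x \<le> y" for x y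
    using even_unimodal_abs_antimono[OF assms(1), of "k * x" "k * y"] that assms(2)
    by (simp add: abs_mult mult_left_mono)
qed

lemma abs_diff_le_abs_add_iff: "\<bar>a - b\<bar> \<le> \<bar>a + b\<bar> \<longleftrightarrow> 0 \<le> (a * b :: real)"
  by (simp add: abs_le_square_iff power2_eq_square algebra_simps)

lemma even_unimodal_shift_diff_sign:
  assumes "even_unimodal g"
  shows "0 \<le> a * b * (g (a - b) - g (a + b))"
proof (cases "0 \<le> a * b")
  case True
  then have "g (a + b) \<le> g (a - b)"
    by (intro even_unimodal_abs_antimono[OF assms]) (simp add: abs_diff_le_abs_add_iff)
  with True show ?thesis by simp
next
  case False
  then have "\<bar>a + b\<bar> \<le> \<bar>a - b\<bar>"
    using abs_diff_le_abs_add_iff[of a b] by linarith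
  then have "g (a - b) \<le> g (a + b)"
    by (rule even_unimodal_abs_antimono[OF assms])
  with False show ?thesis by (simp add: mult_nonpos_nonpos)
qed

lemma unimodal_product_reflect_origin_sign:
  assumes g: "even_unimodal g" and h: "even_unimodal h" "0 \<le> h x"
  shows "0 \<le> d * (x * (g (x - d) * h x)) + d * ((0 - x) * (g (0 - x - d) * h (0 - x)))"
proof -
  have "g (0 - x - d) = g (x + d)" "h (0 - x) = h x"
    using even_unimodal_minus[OF g, of "x + d"] even_unimodal_minus[OF h(1), of x] by simp_all
  then have "d * (x * (g (x - d) * h x)) + d * ((0 - x) * (g (0 - x - d) * h (0 - x)))
      = h x * (x * d * (g (x - d) - g (x + d)))"
    by (simp add: algebra_simps)
  also have "0 \<le> \<dots>"
    by (intro mult_nonneg_nonneg h(2) even_unimodal_shift_diff_sign[OF g])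
  finally show ?thesis .
qed

lemma unimodal_product_reflect_shift_sign:
  assumes g: "even_unimodal g" "0 \<le> g (x - d)" and h: "even_unimodal h"
  shows "0 \<le> d * ((d - x) * (g (x - d) * h x))
    + d * ((d - (2 * d - x)) * (g (2 * d - x - d) * h (2 * d - x)))"
proof -
  have "g (2 * d - x - d) = g (x - d)" "h (x - d - d) = h (2 * d - x)"
    using even_unimodal_minus[OF g(1), of "x - d"] even_unimodal_minus[OF h, of "x - 2 * d"]
    by (simp_all add: algebra_simps)
  then have "d * ((d - x) * (g (x - d) * h x))
      + d * ((d - (2 * d - x)) * (g (2 * d - x - d) * h (2 * d - x)))
      = g (x - d) * ((x - d) * d * (h (x - d - d) - h (x - d + d)))"
    by (simp add: algebra_simps)
  also have "0 \<le> \<dots>"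
    by (intro mult_nonneg_nonneg g(2) even_unimodal_shift_diff_sign[OF h])
  finally show ?thesis .
qed

lemma integral_nonneg_by_reflection:
  fixes f :: "real \<Rightarrow> real"
  assumes f: "integrable lborel f" and nonneg: "\<And>x. 0 \<le> f x + f (t - x)"
  shows "0 \<le> integral\<^sup>L lborel f"
proof -
  have "integral\<^sup>L lborel f = (\<integral>x. f (t + (-1) * x) \<partial>lborel)"
    using lborel_integral_real_affine[of "-1" f t] by simp
  moreover have "integrable lborel (\<lambda>x. f (t + (-1) * x))"
    using lborel_integrable_real_affine[OF f, of "-1" t] by simp
  ultimately have "2 * integral\<^sup>L lborel f = (\<integral>x. f x + f (t - x) \<partial>lborel)"
    using f by simp
  also have "\<dots> \<ge> 0"
    using nonneg by (simp add: integral_nonneg)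
  finally show ?thesis by simp
qed

lemma abs_divide_le_if_between:
  fixes p q d :: real
  assumes "0 \<le> q" "0 \<le> d * p" "0 \<le> d * (d * q - p)" "d = 0 \<Longrightarrow> p = 0"
  shows "\<bar>p / q\<bar> \<le> \<bar>d\<bar>"
proof -
  consider "d < 0" | "d = 0" | "d > 0" by linarith
  then have "\<bar>p\<bar> \<le> \<bar>d\<bar> * q"
  proof cases
    case 1
    with assms(2,3) have "p \<le> 0" "d * q \<le> p"
      by (simp_all add: zero_le_mult_iff)
    with 1 show ?thesis by simp
  next
    case 3
    with assms(2,3) have "0 \<le> p" "p \<le> d * q"
      by (simp_all add: zero_le_mult_iff)
    with 3 show ?thesis by simp
  qed (use assms(4) in simp)
  with assms(1) show ?thesis
    by (cases "q = 0") (simp_all add: abs_divide divide_le_eq)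
qed

lemma unimodal_product_abs_mean_le_shift:
  fixes g h :: "real \<Rightarrow> real"
  assumes g: "even_unimodal g" "\<And>x. 0 \<le> g x" "g \<in> borel_measurable borel"
    and h: "even_unimodal h" "\<And>x. 0 \<le> h x" "integrable lborel h"
    and moment_int: "integrable lborel (\<lambda>x. x * (g (x - d) * h x))"
  shows "\<bar>(\<integral>x. x * (g (x - d) * h x) \<partial>lborel) / (\<integral>x. g (x - d) * h x \<partial>lborel)\<bar> \<le> \<bar>d\<bar>"
proof -
  define f where "f x = g (x - d) * h x" for x
  have [measurable]: "h \<in> borel_measurable borel"
    using h(3) by (simp add: borel_measurable_integrable)
  note [measurable] = g(3)
  have f_int: "integrable lborel f"
  proof (rule Bochner_Integration.integrable_bound[where f = "\<lambda>x. g 0 * h x"])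
    show "integrable lborel (\<lambda>x. g 0 * h x)"
      using h(3) by simp
    show "AE x in lborel. norm (f x) \<le> norm (g 0 * h x)"
      using g h even_unimodal_le_zero[OF g(1)]
      by (intro AE_I2) (simp add: f_def mult_right_mono)
  qed (unfold f_def, measurable)
  have xf_int: "integrable lborel (\<lambda>x. x * f x)"
    using moment_int by (simp add: f_def)
  have "0 \<le> (\<integral>x. d * (x * f x) \<partial>lborel)"
    by (rule integral_nonneg_by_reflection[where t = 0])
      (use xf_int in simp, unfold f_def, rule unimodal_product_reflect_origin_sign[OF g(1) h(1,2)])
  then have first: "0 \<le> d * (\<integral>x. x * f x \<partial>lborel)"
    by simp
  have "0 \<le> (\<integral>x. d * ((d - x) * f x) \<partial>lborel)"
    by (rule integral_nonneg_by_reflection[where t = "2 * d"])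
      (use f_int xf_int in \<open>simp add: left_diff_distrib right_diff_distrib\<close>,
        unfold f_def, rule unimodal_product_reflect_shift_sign[OF g(1,2) h(1)])
  also have "(\<integral>x. d * ((d - x) * f x) \<partial>lborel)
      = d * (d * integral\<^sup>L lborel f - (\<integral>x. x * f x \<partial>lborel))"
    using f_int xf_int by (simp add: left_diff_distrib)
  finally have second: "0 \<le> d * (d * integral\<^sup>L lborel f - (\<integral>x. x * f x \<partial>lborel))" .
  have centred: "(\<integral>x. x * f x \<partial>lborel) = 0" if "d = 0"
  proof -
    have f_even: "f (- x) = f x" for x
      using that even_unimodal_minus[OF g(1), of x] even_unimodal_minus[OF h(1), of x]
      by (simp add: f_def)
    have "0 \<le> (\<integral>x. x * f x \<partial>lborel)"
      by (rule integral_nonneg_by_reflection[where t = 0]) (use xf_int f_even in simp_all)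
    moreover have "0 \<le> (\<integral>x. - (x * f x) \<partial>lborel)"
      by (rule integral_nonneg_by_reflection[where t = 0]) (use xf_int f_even in simp_all)
    ultimately show ?thesis by simp
  qed
  have "0 \<le> integral\<^sup>L lborel f"
    using g(2) h(2) by (simp add: f_def integral_nonneg)
  from abs_divide_le_if_between[OF this first second centred]
  show ?thesis by (simp add: f_def[abs_def])
qed

theorem lemma1:
  fixes \<xi> :: "real \<Rightarrow> real" and \<eta> :: "'j \<Rightarrow> real \<Rightarrow> real" and \<nu> :: "'j \<Rightarrow> real" and n :: real
  assumes "prob_density \<xi>" and "even_unimodal \<xi>"
    and "\<And>j. prob_density (\<eta> j)" and "\<And>j. even_unimodal (\<eta> j)"
    and "n > 0" and "\<And>j. \<nu> j > 0"
    and "\<And>j d. integrable lborel (Iintegrand 1 n \<xi> (\<eta> j) (\<nu> j) d)"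
  shows "\<forall>j d. \<bar>Iint 1 n \<xi> (\<eta> j) (\<nu> j) d / Iint 0 n \<xi> (\<eta> j) (\<nu> j) d\<bar> \<le> \<bar>d\<bar>"
proof (intro allI)
  fix j d
  define g where "g = (\<lambda>y. sqrt n * \<eta> j (sqrt n * y))"
  define h where "h = (\<lambda>x. \<nu> j * \<xi> (\<nu> j * x))"
  have \<xi>: "\<xi> \<in> borel_measurable borel" "\<And>x. 0 \<le> \<xi> x" "integrable lborel \<xi>"
    and \<eta>: "\<eta> j \<in> borel_measurable borel" "\<And>x. 0 \<le> \<eta> j x"
    using assms(1,3) unfolding prob_density_def by auto
  have "even_unimodal g" "even_unimodal h"
    unfolding g_def h_def using assms(2,5) assms(4,6)[of j] by (simp_all add: even_unimodal_scaled)
  moreover have "\<And>y. 0 \<le> g y" "\<And>x. 0 \<le> h x"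
    unfolding g_def h_def using \<xi>(2) \<eta>(2) assms(5) assms(6)[of j] by simp_all
  moreover have "g \<in> borel_measurable borel"
    unfolding g_def using \<eta>(1) by measurable
  moreover have "integrable lborel h"
    unfolding h_def using lborel_integrable_real_affine[OF \<xi>(3), of "\<nu> j" 0] assms(6)[of j] by simp
  moreover have "\<And>i. Iintegrand i n \<xi> (\<eta> j) (\<nu> j) d = (\<lambda>x. x ^ i * (g (x - d) * h x))"
    unfolding Iintegrand_def g_def h_def by (simp add: fun_eq_iff mult_ac)
  ultimately show "\<bar>Iint 1 n \<xi> (\<eta> j) (\<nu> j) d / Iint 0 n \<xi> (\<eta> j) (\<nu> j) d\<bar> \<le> \<bar>d\<bar>"
    using unimodal_product_abs_mean_le_shift[of g h d] assms(7)[of j d]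
    unfolding Iint_def by simp
qed

end
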